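(* Let $X_1,\dots,X_n$ be (possibly dependent) identically distributed component lifetimes with common distribution that of $X$, and let $\tau_1(\mathbf X)$ and $\tau_2(\mathbf X)$ be lifetimes of two coherent systems built on such components, with domination functions $h_1$ and $h_2$ respectively, i.e. $\bar F_{\tau_i(\mathbf X)}(x)=h_i(\bar F_X(x))$, $i=1,2$. Let $H_i(p)=p h_i'(p)/h_i(p)$, $p\in(0,1)$. Then $\tau_1(\mathbf X)\underset{c}{\prec}\tau_2(\mathbf X)$ (resp. $\tau_1(\mathbf X)\underset{c}{\succ}\tau_2(\mathbf X)$) if and only if $H_1(p)/H_2(p)$ is decreasing (resp. increasing) in $p\in(0,1)$.
   Context: All random variables are non-negative and absolutely continuous with support $[0,\infty)$. For a random variable $W$: density $f_W$, survival function $\bar F_W$, hazard rate $r_W=f_W/\bar F_W$. $U\underset{c}{\prec}V$ means $r_U(x)/r_V(x)$ is increasing in $x\ge0$; $U\underset{c}{\succ}V$ means $V\underset{c}{\prec}U$. The domination function $h:[0,1]\to[0,1]$ of a coherent system with identically distributed (possibly dependent) components is the function, depending on the structure and the survival copula, with system reliability $h(\bar F_X(x))$; it is increasing, continuous, $h(0)=0$, $h(1)=1$, assumed differentiable. "Increasing" means non-decreasing, "decreasing" means non-increasing. *)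

theory Defs
  imports "HOL-Analysis.Analysis"
begin

text \<open>A non-negative absolutely continuous lifetime with support [0,infinity),
  given by its survival function S and density f; the density is taken to be
  the (right) derivative of -S at every point x \<ge> 0.\<close>
definition lifetime :: "(real \<Rightarrow> real) \<Rightarrow> (real \<Rightarrow> real) \<Rightarrow> bool" where
  "lifetime S f \<longleftrightarrow>
     (\<forall>x\<le>0. S x = 1) \<and>
     (\<forall>x y. 0 \<le> x \<longrightarrow> x < y \<longrightarrow> S y < S x) \<and>
     (S \<longlongrightarrow> 0) at_top \<and>
     (\<forall>x<0. f x = 0) \<and>
     (\<forall>x\<ge>0. f x \<ge> 0 \<and> (S has_real_derivative - f x) (at x within {0..}))"

definition hazard :: "(real \<Rightarrow> real) \<Rightarrow> (real \<Rightarrow> real) \<Rightarrow> real \<Rightarrow> real" where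
  "hazard S f x = f x / S x"

definition c_prec :: "(real \<Rightarrow> real) \<Rightarrow> (real \<Rightarrow> real) \<Rightarrow> (real \<Rightarrow> real) \<Rightarrow> (real \<Rightarrow> real) \<Rightarrow> bool" where
  "c_prec SU fU SV fV \<longleftrightarrow> mono_on {0..} (\<lambda>x. hazard SU fU x / hazard SV fV x)"

definition domination_fun :: "(real \<Rightarrow> real) \<Rightarrow> (real \<Rightarrow> real) \<Rightarrow> bool" where
  "domination_fun h h' \<longleftrightarrow>
     mono_on {0..1} h \<and> continuous_on {0..1} h \<and> h 0 = 0 \<and> h 1 = 1 \<and>
     (\<forall>p\<in>{0..1}. (h has_real_derivative h' p) (at p within {0..1}))"

definition Hfun :: "(real \<Rightarrow> real) \<Rightarrow> (real \<Rightarrow> real) \<Rightarrow> real \<Rightarrow> real" where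
  "Hfun h h' p = p * h' p / h p"

end

theory Submission
  imports Defs
begin

text \<open>For x > 0 the hazard rate of the system with survival function h(S) is
  h'(S x) f(x) / h(S x), so the ratio of the two hazard rates is H1(p)/H2(p) at p = S x.
  Since S maps (0,\<infinity>) decreasingly onto (0,1), monotonicity of the one ratio in x is
  monotonicity of the other in p with the direction reversed. The point x = 0, i.e. p = 1,
  where the hazard ratio is h1'(1)/h2'(1), needs a separate argument: if H1/H2 \<le> c on (q,1),
  then ln h1 - c ln h2 decreases on (q,1) and vanishes at 1, which forces h1'(1) \<le> c h2'(1).\<close>

lemma has_real_derivative_le_at_right_endpoint:
  fixes g k :: "real \<Rightarrow> real"
  assumes "a < b"
    and g: "(g has_real_derivative g') (at b within {a..b})"
    and k: "(k has_real_derivative k') (at b within {a..b})"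
    and "g b = k b" and le: "\<And>x. a < x \<Longrightarrow> x < b \<Longrightarrow> k x \<le> g x"
  shows "g' \<le> k'"
proof (rule ccontr)
  assume "\<not> g' \<le> k'"
  then have "0 < g' - k'" by simp
  moreover have "((\<lambda>x. g x - k x) has_real_derivative g' - k') (at b within {a..b})"
    using g k by (rule DERIV_diff)
  ultimately obtain d where "d > 0"
    and d: "\<forall>t>0. b - t \<in> {a..b} \<longrightarrow> t < d \<longrightarrow> g (b - t) - k (b - t) < g b - k b"
    using has_real_derivative_pos_inc_left by blast
  define t where "t = min (d / 2) ((b - a) / 2)"
  have "0 < t" "t < d" using \<open>d > 0\<close> \<open>a < b\<close> by (simp_all add: t_def)
  moreover have "t \<le> (b - a) / 2" unfolding t_def by (rule min.cobounded2)
  ultimately have "a < b - t" "g (b - t) - k (b - t) < g b - k b"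
    using d \<open>a < b\<close> by simp_all
  then show False using le[of "b - t"] \<open>g b = k b\<close> \<open>0 < t\<close> by simp
qed

lemma mono_on_atLeast_iff:
  fixes R :: "'a::linorder \<Rightarrow> 'b::order"
  shows "mono_on {a..} R \<longleftrightarrow> mono_on {a<..} R \<and> (\<forall>y>a. R a \<le> R y)"
proof
  assume R: "mono_on {a..} R"
  have "mono_on {a<..} R" using R by (rule mono_on_subset) auto
  moreover have "R a \<le> R y" if "a < y" for y
    using that by (intro monotone_onD[OF R]) auto
  ultimately show "mono_on {a<..} R \<and> (\<forall>y>a. R a \<le> R y)" by blast
next
  assume R: "mono_on {a<..} R \<and> (\<forall>y>a. R a \<le> R y)"
  show "mono_on {a..} R"
  proof (rule monotone_onI)
    fix x y assume "x \<in> {a..}" "y \<in> {a..}" "x \<le> y"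
    then consider "x = y" | "x = a" "a < y" | "a < x" "a < y" by fastforce
    then show "R x \<le> R y"
      using R mono_onD[of "{a<..}" R x y] \<open>x \<le> y\<close> by cases auto
  qed
qed

lemma mono_on_comp_iff_antimono_on:
  fixes S :: "'a::linorder \<Rightarrow> 'b::linorder" and G :: "'b \<Rightarrow> 'c::order"
  assumes S: "\<And>x y. x \<in> A \<Longrightarrow> y \<in> A \<Longrightarrow> x < y \<Longrightarrow> S y < S x" and img: "S ` A = B"
  shows "mono_on A (\<lambda>x. G (S x)) \<longleftrightarrow> antimono_on B G"
proof
  assume mono: "mono_on A (\<lambda>x. G (S x))"
  show "antimono_on B G"
  proof (rule monotone_onI)
    fix p q assume "p \<in> B" "q \<in> B" "p \<le> q"
    then obtain x y where "x \<in> A" "y \<in> A" "p = S x" "q = S y" using img by blast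
    with \<open>p \<le> q\<close> S have "y \<le> x"
      by (meson linorder_not_less order_less_le_trans order_less_irrefl)
    then show "G p \<ge> G q"
      using monotone_onD[OF mono \<open>y \<in> A\<close> \<open>x \<in> A\<close>] \<open>p = S x\<close> \<open>q = S y\<close> by simp
  qed
next
  assume anti: "antimono_on B G"
  show "mono_on A (\<lambda>x. G (S x))"
  proof (rule monotone_onI)
    fix x y assume "x \<in> A" "y \<in> A" "x \<le> y"
    with S have "S y \<le> S x" by (cases "x = y") (auto intro: less_imp_le)
    then show "G (S x) \<le> G (S y)"
      using monotone_onD[OF anti] \<open>x \<in> A\<close> \<open>y \<in> A\<close> img by blast
  qed
qed

lemma antimono_on_ratio_iff_mono_on_inverse_ratio:
  fixes f g :: "'a::order \<Rightarrow> real"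
  assumes "\<And>x. x \<in> A \<Longrightarrow> 0 < f x" "\<And>x. x \<in> A \<Longrightarrow> 0 < g x"
  shows "antimono_on A (\<lambda>x. g x / f x) \<longleftrightarrow> mono_on A (\<lambda>x. f x / g x)"
proof -
  have "g y / f y \<le> g x / f x \<longleftrightarrow> f x / g x \<le> f y / g y" if "x \<in> A" "y \<in> A" for x y
    using assms[OF that(1)] assms[OF that(2)] by (simp add: field_simps)
  then show ?thesis unfolding monotone_on_def by blast
qed

lemma lifetime_survival_strict_antimono:
  assumes "lifetime S f" "0 \<le> x" "x < y"
  shows "S y < S x"
  using assms unfolding lifetime_def by blast

lemma lifetime_survival_zero: "lifetime S f \<Longrightarrow> S 0 = 1"
  unfolding lifetime_def by simp

lemma lifetime_survival_continuous:
  assumes "lifetime S f"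
  shows "continuous_on {0..} S"
  using assms unfolding lifetime_def by (intro DERIV_continuous_on[where D="\<lambda>x. - f x"]) auto

lemma lifetime_survival_pos:
  assumes X: "lifetime S f" and "0 \<le> x"
  shows "0 < S x"
proof -
  have "(S \<longlongrightarrow> 0) at_top" using X unfolding lifetime_def by blast
  moreover have "\<forall>\<^sub>F y in at_top. S y \<le> S (x + 1)"
    unfolding eventually_at_top_linorder
  proof (intro exI allI impI)
    fix y assume "x + 1 \<le> y"
    then show "S y \<le> S (x + 1)"
      using lifetime_survival_strict_antimono[OF X, of "x + 1" y] \<open>0 \<le> x\<close>
      by (cases "y = x + 1") auto
  qed
  ultimately have "0 \<le> S (x + 1)" by (rule tendsto_upperbound) simp
  also have "S (x + 1) < S x" using lifetime_survival_strict_antimono[OF X] \<open>0 \<le> x\<close> by simp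
  finally show ?thesis .
qed

lemma lifetime_survival_image:
  assumes X: "lifetime S f"
  shows "S ` {0<..} = {0<..<1}"
proof
  show "S ` {0<..} \<subseteq> {0<..<1}"
  proof
    fix p assume "p \<in> S ` {0<..}"
    then obtain x where "0 < x" "p = S x" by auto
    then show "p \<in> {0<..<1}"
      using lifetime_survival_pos[OF X, of x] lifetime_survival_strict_antimono[OF X, of 0 x]
        lifetime_survival_zero[OF X] by simp
  qed
next
  show "{0<..<1} \<subseteq> S ` {0<..}"
  proof
    fix p :: real assume p: "p \<in> {0<..<1}"
    have "(S \<longlongrightarrow> 0) at_top" using X unfolding lifetime_def by blast
    then have "\<forall>\<^sub>F y in at_top. S y < p" using p by (simp add: order_tendstoD(2))
    then obtain N where N: "\<And>y. N \<le> y \<Longrightarrow> S y < p"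
      unfolding eventually_at_top_linorder by blast
    define y where "y = max N 1"
    have "0 < y" "S y < p" using N by (simp_all add: y_def)
    moreover have "continuous_on {0..y} S"
      using lifetime_survival_continuous[OF X] by (rule continuous_on_subset) auto
    ultimately obtain x where "0 \<le> x" "x \<le> y" "S x = p"
      using IVT2'[of S y p 0] p lifetime_survival_zero[OF X] by auto
    moreover have "x \<noteq> 0" using \<open>S x = p\<close> p lifetime_survival_zero[OF X] by auto
    ultimately have "x \<in> {0<..}" "p = S x" by simp_all
    then show "p \<in> S ` {0<..}" by blast
  qed
qed

lemma domination_fun_DERIV:
  assumes "domination_fun h h'" "0 < p" "p < 1"
  shows "(h has_real_derivative h' p) (at p)"
proof -
  have "(h has_real_derivative h' p) (at p within {0..1})"
    using assms unfolding domination_fun_def by simp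
  then show ?thesis using assms at_within_Icc_at[of 0 p 1] by simp
qed

lemma domination_fun_le_one:
  assumes "domination_fun h h'" "0 \<le> p" "p \<le> 1"
  shows "h p \<le> 1"
  using assms mono_onD[of "{0..1}" h p 1] unfolding domination_fun_def by auto

lemma domination_fun_pos:
  assumes h: "domination_fun h h'" and h'_pos: "\<forall>p\<in>{0<..<1}. h' p > 0"
    and "0 < p" "p \<le> 1"
  shows "0 < h p"
proof -
  have "h 0 < h p"
  proof (rule DERIV_pos_imp_increasing_open[of 0 p h])
    show "\<exists>y. (h has_real_derivative y) (at t) \<and> 0 < y" if "0 < t" "t < p" for t
      using domination_fun_DERIV[OF h] h'_pos that \<open>p \<le> 1\<close> by force
    show "continuous_on {0..p} h"
      using h \<open>p \<le> 1\<close> unfolding domination_fun_def by (auto elim: continuous_on_subset)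
  qed fact
  then show ?thesis using h unfolding domination_fun_def by simp
qed

lemma domination_fun_deriv_one_nonneg:
  assumes h: "domination_fun h h'"
  shows "0 \<le> h' 1"
proof (rule has_real_derivative_le_at_right_endpoint)
  show "(h has_real_derivative h' 1) (at 1 within {0..1})"
    using h unfolding domination_fun_def by simp
  show "h x \<le> 1" if "0 < x" "x < 1" for x
    using domination_fun_le_one[OF h] that by simp
qed (use h in \<open>auto simp: domination_fun_def\<close>)

lemma has_real_derivative_ln_comp:
  fixes h :: "real \<Rightarrow> real"
  assumes "(h has_real_derivative d) (at t within s)" "0 < h t"
  shows "((\<lambda>t. ln (h t)) has_real_derivative d / h t) (at t within s)"
  using DERIV_chain'[OF assms(1) DERIV_ln_divide[OF assms(2)]] by simp

lemma domination_fun_ln_le: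
  assumes h1: "domination_fun h1 h1'" and h1'_pos: "\<forall>p\<in>{0<..<1}. h1' p > 0"
    and h2: "domination_fun h2 h2'" and h2'_pos: "\<forall>p\<in>{0<..<1}. h2' p > 0"
    and "0 < q"
    and log_deriv_le: "\<And>p. q < p \<Longrightarrow> p < 1 \<Longrightarrow> h1' p / h1 p \<le> c * (h2' p / h2 p)"
    and "q < p" "p \<le> 1"
  shows "c * ln (h2 p) \<le> ln (h1 p)"
proof -
  have pos: "0 < h1 t" "0 < h2 t" if "p \<le> t" "t \<le> 1" for t
    using domination_fun_pos[OF h1 h1'_pos] domination_fun_pos[OF h2 h2'_pos] that
      \<open>0 < q\<close> \<open>q < p\<close> by auto
  have "ln (h1 1) - c * ln (h2 1) \<le> ln (h1 p) - c * ln (h2 p)"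
  proof (rule DERIV_nonpos_imp_decreasing_open[of p 1 "\<lambda>t. ln (h1 t) - c * ln (h2 t)"])
    fix t assume "p < t" "t < 1"
    then have "0 < h1 t" "0 < h2 t" "0 < t" using pos \<open>0 < q\<close> \<open>q < p\<close> by auto
    with \<open>t < 1\<close> have "((\<lambda>t. ln (h1 t) - c * ln (h2 t)) has_real_derivative
        h1' t / h1 t - c * (h2' t / h2 t)) (at t)"
      by (intro DERIV_diff DERIV_cmult has_real_derivative_ln_comp
          domination_fun_DERIV[OF h1] domination_fun_DERIV[OF h2])
    moreover have "h1' t / h1 t - c * (h2' t / h2 t) \<le> 0"
      using log_deriv_le[of t] \<open>p < t\<close> \<open>t < 1\<close> \<open>q < p\<close> by simp
    ultimately show
      "\<exists>y. ((\<lambda>t. ln (h1 t) - c * ln (h2 t)) has_real_derivative y) (at t) \<and> y \<le> 0"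
      by blast
  next
    have "continuous_on {p..1} h1" "continuous_on {p..1} h2"
      using h1 h2 \<open>0 < q\<close> \<open>q < p\<close> unfolding domination_fun_def
      by (auto elim: continuous_on_subset)
    moreover have "\<forall>t\<in>{p..1}. h1 t \<noteq> 0" "\<forall>t\<in>{p..1}. h2 t \<noteq> 0"
      using pos by (simp_all add: less_imp_neq[symmetric])
    ultimately show "continuous_on {p..1} (\<lambda>t. ln (h1 t) - c * ln (h2 t))"
      by (intro continuous_on_diff continuous_on_mult_left continuous_on_ln)
  qed fact
  moreover have "h1 1 = 1" "h2 1 = 1" using h1 h2 unfolding domination_fun_def by auto
  ultimately show ?thesis by simp
qed

lemma domination_fun_deriv_one_le:
  assumes h1: "domination_fun h1 h1'" and h1'_pos: "\<forall>p\<in>{0<..<1}. h1' p > 0"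
    and h2: "domination_fun h2 h2'" and h2'_pos: "\<forall>p\<in>{0<..<1}. h2' p > 0"
    and "0 < q" "q < 1"
    and log_deriv_le: "\<And>p. q < p \<Longrightarrow> p < 1 \<Longrightarrow> h1' p / h1 p \<le> c * (h2' p / h2 p)"
  shows "h1' 1 \<le> c * h2' 1"
proof -
  have one: "h1 1 = 1" "h2 1 = 1" using h1 h2 unfolding domination_fun_def by auto
  have DERIV_within: "(h has_real_derivative h' 1) (at 1 within {q..1})"
    if "domination_fun h h'" for h h'
  proof -
    have "(h has_real_derivative h' 1) (at 1 within {0..1})"
      using that unfolding domination_fun_def by simp
    then show ?thesis by (rule has_field_derivative_subset) (use \<open>0 < q\<close> in auto)
  qed
  have "h1' 1 / h1 1 \<le> c * (h2' 1 / h2 1)"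
  proof (rule has_real_derivative_le_at_right_endpoint[OF \<open>q < 1\<close>])
    show "((\<lambda>t. ln (h1 t)) has_real_derivative h1' 1 / h1 1) (at 1 within {q..1})"
      by (rule has_real_derivative_ln_comp[OF DERIV_within[OF h1]]) (simp add: one)
    show "((\<lambda>t. c * ln (h2 t)) has_real_derivative c * (h2' 1 / h2 1)) (at 1 within {q..1})"
      by (intro DERIV_cmult has_real_derivative_ln_comp DERIV_within[OF h2]) (simp add: one)
    show "ln (h1 1) = c * ln (h2 1)" by (simp add: one)
    show "c * ln (h2 p) \<le> ln (h1 p)" if "q < p" "p < 1" for p
      using domination_fun_ln_le[OF h1 h1'_pos h2 h2'_pos \<open>0 < q\<close> log_deriv_le] that by simp
  qed
  then show ?thesis using one by simp
qed

lemma Hfun_pos: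
  assumes "domination_fun h h'" "\<forall>p\<in>{0<..<1}. h' p > 0" "0 < p" "p < 1"
  shows "0 < Hfun h h' p"
  using domination_fun_pos[OF assms(1,2), of p] assms(2-) unfolding Hfun_def by simp

lemma Hfun_ratio_eq:
  assumes "p \<noteq> 0"
  shows "Hfun h1 h1' p / Hfun h2 h2' p = (h1' p / h1 p) / (h2' p / h2 p)"
proof -
  have "Hfun h h' p = p * (h' p / h p)" for h h' :: "real \<Rightarrow> real" by (simp add: Hfun_def)
  then show ?thesis using assms by simp
qed

lemma lifetime_comp_density:
  assumes X: "lifetime S f" and h: "domination_fun h h'"
    and T: "lifetime (\<lambda>x. h (S x)) fT" and "0 \<le> x"
  shows "fT x = h' (S x) * f x"
proof -
  have "S ` {0..} \<subseteq> {0..1}"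
  proof
    fix p assume "p \<in> S ` {0..}"
    then obtain y where "0 \<le> y" "p = S y" by auto
    moreover have "S y \<le> S 0"
      using lifetime_survival_strict_antimono[OF X, of 0 y] \<open>0 \<le> y\<close>
      by (cases "y = 0") auto
    ultimately show "p \<in> {0..1}"
      using lifetime_survival_pos[OF X, of y] lifetime_survival_zero[OF X] by simp
  qed
  moreover have "(h has_real_derivative h' (S x)) (at (S x) within {0..1})"
    using h calculation \<open>0 \<le> x\<close> unfolding domination_fun_def by auto
  ultimately have "(h has_real_derivative h' (S x)) (at (S x) within S ` {0..})"
    by (rule has_field_derivative_subset[rotated])
  moreover have "(S has_real_derivative - f x) (at x within {0..})"
    using X \<open>0 \<le> x\<close> unfolding lifetime_def by simp
  ultimately have "((\<lambda>y. h (S y)) has_real_derivative h' (S x) * - f x) (at x within {0..})"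
    by (rule DERIV_image_chain[unfolded comp_def])
  moreover have "((\<lambda>y. h (S y)) has_real_derivative - fT x) (at x within {0..})"
    using T \<open>0 \<le> x\<close> unfolding lifetime_def by simp
  moreover have "at x within {0..} \<noteq> bot"
  proof -
    have "{x<..} \<subseteq> {0..} - {x}" using \<open>0 \<le> x\<close> by auto
    then have "closure {x<..} \<subseteq> closure ({0..} - {x})" by (rule closure_mono)
    then have "x \<in> closure ({0..} - {x})" by auto
    then show ?thesis by (simp add: at_within_eq_bot_iff)
  qed
  ultimately have "h' (S x) * - f x = - fT x"
    by (rule has_field_derivative_unique)
  then show ?thesis by simp
qed

lemma hazard_comp:
  assumes "lifetime S f" "domination_fun h h'" "lifetime (\<lambda>x. h (S x)) fT" "0 \<le> x"
  shows "hazard (\<lambda>x. h (S x)) fT x = h' (S x) * f x / h (S x)"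
  unfolding hazard_def lifetime_comp_density[OF assms] ..

lemma hazard_ratio_eq_Hfun_ratio:
  assumes X: "lifetime S f" and f_pos: "\<forall>x>0. f x > 0"
    and h1: "domination_fun h1 h1'" and h2: "domination_fun h2 h2'"
    and h1'_pos: "\<forall>p\<in>{0<..<1}. h1' p > 0" and h2'_pos: "\<forall>p\<in>{0<..<1}. h2' p > 0"
    and T1: "lifetime (\<lambda>x. h1 (S x)) fT1" and T2: "lifetime (\<lambda>x. h2 (S x)) fT2"
    and "0 < x"
  shows "hazard (\<lambda>x. h1 (S x)) fT1 x / hazard (\<lambda>x. h2 (S x)) fT2 x
           = Hfun h1 h1' (S x) / Hfun h2 h2' (S x)"
proof -
  have "S x \<in> {0<..<1}" using lifetime_survival_image[OF X] \<open>0 < x\<close> by blast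
  moreover from this have "0 < h1 (S x)" "0 < h2 (S x)" "0 < h1' (S x)" "0 < h2' (S x)"
    using domination_fun_pos[OF h1 h1'_pos] domination_fun_pos[OF h2 h2'_pos] h1'_pos h2'_pos
    by auto
  moreover have "0 < f x" using f_pos \<open>0 < x\<close> by simp
  ultimately show ?thesis
    unfolding Hfun_def hazard_comp[OF X h1 T1 less_imp_le[OF \<open>0 < x\<close>]]
      hazard_comp[OF X h2 T2 less_imp_le[OF \<open>0 < x\<close>]]
    by (simp add: field_simps)
qed

lemma hazard_ratio_zero_le_Hfun_ratio:
  assumes X: "lifetime S f"
    and h1: "domination_fun h1 h1'" and h2: "domination_fun h2 h2'"
    and h1'_pos: "\<forall>p\<in>{0<..<1}. h1' p > 0" and h2'_pos: "\<forall>p\<in>{0<..<1}. h2' p > 0"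
    and T1: "lifetime (\<lambda>x. h1 (S x)) fT1" and T2: "lifetime (\<lambda>x. h2 (S x)) fT2"
    and anti: "antimono_on {0<..<1} (\<lambda>p. Hfun h1 h1' p / Hfun h2 h2' p)"
    and "0 < p" "p < 1"
  shows "hazard (\<lambda>x. h1 (S x)) fT1 0 / hazard (\<lambda>x. h2 (S x)) fT2 0
           \<le> Hfun h1 h1' p / Hfun h2 h2' p"
proof -
  define G where "G p = Hfun h1 h1' p / Hfun h2 h2' p" for p
  have "h1' 1 \<le> G p * h2' 1"
  proof (rule domination_fun_deriv_one_le[OF h1 h1'_pos h2 h2'_pos \<open>0 < p\<close> \<open>p < 1\<close>])
    fix t assume "p < t" "t < 1"
    then have "G t \<le> G p" using monotone_onD[OF anti] \<open>0 < p\<close> by (simp add: G_def)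
    moreover have "G t = (h1' t / h1 t) / (h2' t / h2 t)"
      unfolding G_def using Hfun_ratio_eq[of t] \<open>0 < p\<close> \<open>p < t\<close> by simp
    moreover have "0 < h2' t / h2 t"
      using \<open>p < t\<close> \<open>t < 1\<close> \<open>0 < p\<close> domination_fun_pos[OF h2 h2'_pos, of t] h2'_pos
      by simp
    ultimately show "h1' t / h1 t \<le> G p * (h2' t / h2 t)"
      by (metis pos_divide_le_eq)
  qed
  moreover have "0 \<le> h2' 1" "0 \<le> f 0"
    using domination_fun_deriv_one_nonneg[OF h2] X unfolding lifetime_def by auto
  moreover have "0 < G p"
    unfolding G_def using Hfun_pos[OF h1 h1'_pos] Hfun_pos[OF h2 h2'_pos] \<open>0 < p\<close> \<open>p < 1\<close>
    by simp
  \<comment> \<open>if h2'(1) f(0) = 0, the hazard ratio at 0 is 0 by the convention x / 0 = 0\<close>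
  ultimately have "h1' 1 * f 0 / (h2' 1 * f 0) \<le> G p"
    by (cases "h2' 1 * f 0 = 0") (auto simp: divide_le_eq)
  then show ?thesis
    using h1 h2
    unfolding G_def hazard_comp[OF X h1 T1 order_refl] hazard_comp[OF X h2 T2 order_refl]
      lifetime_survival_zero[OF X] domination_fun_def
    by simp
qed

lemma c_prec_comp_iff_antimono_Hfun_ratio:
  fixes S f h1 h1' h2 h2' fT1 fT2 :: "real \<Rightarrow> real"
  assumes X: "lifetime S f"
    and f_pos: "\<forall>x>0. f x > 0"
    and h1: "domination_fun h1 h1'" and h2: "domination_fun h2 h2'"
    and h1'_pos: "\<forall>p\<in>{0<..<1}. h1' p > 0"
    and h2'_pos: "\<forall>p\<in>{0<..<1}. h2' p > 0"
    and T1: "lifetime (\<lambda>x. h1 (S x)) fT1"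
    and T2: "lifetime (\<lambda>x. h2 (S x)) fT2"
  shows "c_prec (\<lambda>x. h1 (S x)) fT1 (\<lambda>x. h2 (S x)) fT2 \<longleftrightarrow>
           antimono_on {0<..<1} (\<lambda>p. Hfun h1 h1' p / Hfun h2 h2' p)"
proof -
  define G where "G p = Hfun h1 h1' p / Hfun h2 h2' p" for p
  define R where "R x = hazard (\<lambda>x. h1 (S x)) fT1 x / hazard (\<lambda>x. h2 (S x)) fT2 x" for x
  have R_eq_G: "R x = G (S x)" if "0 < x" for x
    unfolding R_def G_def
    by (rule hazard_ratio_eq_Hfun_ratio[OF X f_pos h1 h2 h1'_pos h2'_pos T1 T2 that])
  have "mono_on {0<..} R \<longleftrightarrow> mono_on {0<..} (\<lambda>x. G (S x))"
    unfolding monotone_on_def using R_eq_G by auto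
  also have "\<dots> \<longleftrightarrow> antimono_on {0<..<1} G"
    using lifetime_survival_strict_antimono[OF X]
    by (intro mono_on_comp_iff_antimono_on lifetime_survival_image[OF X]) auto
  finally have "mono_on {0<..} R \<longleftrightarrow> antimono_on {0<..<1} G" .
  moreover have "R 0 \<le> R y" if anti: "antimono_on {0<..<1} G" and "0 < y" for y
  proof -
    have "S y \<in> {0<..<1}" using lifetime_survival_image[OF X] \<open>0 < y\<close> by blast
    then show ?thesis
      using hazard_ratio_zero_le_Hfun_ratio[OF X h1 h2 h1'_pos h2'_pos T1 T2, of "S y"]
        anti R_eq_G[OF \<open>0 < y\<close>]
      unfolding R_def G_def by simp
  qed
  ultimately show ?thesis
    unfolding c_prec_def R_def[symmetric] G_def[symmetric] mono_on_atLeast_iff by blast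
qed

theorem proposition3p1:
  fixes S f h1 h1' h2 h2' fT1 fT2 :: "real \<Rightarrow> real"
  assumes X: "lifetime S f"
    and f_pos: "\<forall>x>0. f x > 0"
    and h1: "domination_fun h1 h1'" and h2: "domination_fun h2 h2'"
    and h1'_pos: "\<forall>p\<in>{0<..<1}. h1' p > 0"
    and h2'_pos: "\<forall>p\<in>{0<..<1}. h2' p > 0"
    and T1: "lifetime (\<lambda>x. h1 (S x)) fT1"
    and T2: "lifetime (\<lambda>x. h2 (S x)) fT2"
  shows "(c_prec (\<lambda>x. h1 (S x)) fT1 (\<lambda>x. h2 (S x)) fT2 \<longleftrightarrow>
            antimono_on {0<..<1} (\<lambda>p. Hfun h1 h1' p / Hfun h2 h2' p))
       \<and> (c_prec (\<lambda>x. h2 (S x)) fT2 (\<lambda>x. h1 (S x)) fT1 \<longleftrightarrow>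
            mono_on {0<..<1} (\<lambda>p. Hfun h1 h1' p / Hfun h2 h2' p))"
proof
  show "c_prec (\<lambda>x. h1 (S x)) fT1 (\<lambda>x. h2 (S x)) fT2 \<longleftrightarrow>
          antimono_on {0<..<1} (\<lambda>p. Hfun h1 h1' p / Hfun h2 h2' p)"
    by (rule c_prec_comp_iff_antimono_Hfun_ratio[OF X f_pos h1 h2 h1'_pos h2'_pos T1 T2])
  have "c_prec (\<lambda>x. h2 (S x)) fT2 (\<lambda>x. h1 (S x)) fT1 \<longleftrightarrow>
          antimono_on {0<..<1} (\<lambda>p. Hfun h2 h2' p / Hfun h1 h1' p)"
    by (rule c_prec_comp_iff_antimono_Hfun_ratio[OF X f_pos h2 h1 h2'_pos h1'_pos T2 T1])
  also have "\<dots> \<longleftrightarrow> mono_on {0<..<1} (\<lambda>p. Hfun h1 h1' p / Hfun h2 h2' p)"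
    using Hfun_pos[OF h1 h1'_pos] Hfun_pos[OF h2 h2'_pos]
    by (intro antimono_on_ratio_iff_mono_on_inverse_ratio) auto
  finally show "c_prec (\<lambda>x. h2 (S x)) fT2 (\<lambda>x. h1 (S x)) fT1 \<longleftrightarrow>
                  mono_on {0<..<1} (\<lambda>p. Hfun h1 h1' p / Hfun h2 h2' p)" .
qed

end
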